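(* Let $\mathcal X\subseteq\{0,1\}^n$, $\pmb x\in\mathcal X$, $\hat{\pmb c},\pmb d\in\mathbb R^n_{\ge0}$ and integers $\Gamma,\Gamma'\ge0$ be fixed. Then the adversarial problem \[\max_{\pmb\delta\in\Delta(\Gamma),\,\pmb y\in\mathcal X}\ \min_{\pmb\epsilon\in\Delta(\Gamma')}\ \sum_{i\in[n]}(\hat c_i+d_i\delta_i+d_i\epsilon_i)(x_i-y_i)\] has an optimal solution $(\pmb\delta,\pmb y)$ with $y_i+\delta_i\le1$ for all $i\in[n]$.
   Context: $[n]=\{1,\dots,n\}$; for an integer $k\ge0$, $\Delta(k)=\{\pmb\delta\in\{0,1\}^n:\sum_i\delta_i\le k\}$. $\mathcal X$ is a nonempty set of feasible solutions of a combinatorial optimization problem. *)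

theory Defs
  imports Complex_Main
begin

text \<open>Vectors in R^n / {0,1}^n are functions nat => real, with coordinates
indexed by [n] = {1..n} and set to 0 outside [n].\<close>

definition binvecs :: "nat \<Rightarrow> (nat \<Rightarrow> real) set" where
  "binvecs n = {v. (\<forall>i\<in>{1..n}. v i = 0 \<or> v i = 1) \<and> (\<forall>i. i \<notin> {1..n} \<longrightarrow> v i = 0)}"

definition Delta :: "nat \<Rightarrow> nat \<Rightarrow> (nat \<Rightarrow> real) set" where
  "Delta n k = {\<delta> \<in> binvecs n. (\<Sum>i\<in>{1..n}. \<delta> i) \<le> real k}"

definition adv_obj :: "nat \<Rightarrow> (nat \<Rightarrow> real) \<Rightarrow> (nat \<Rightarrow> real) \<Rightarrow> (nat \<Rightarrow> real)
    \<Rightarrow> (nat \<Rightarrow> real) \<Rightarrow> (nat \<Rightarrow> real) \<Rightarrow> (nat \<Rightarrow> real) \<Rightarrow> real" where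
  "adv_obj n chat d x \<delta> y \<epsilon> =
     (\<Sum>i\<in>{1..n}. (chat i + d i * \<delta> i + d i * \<epsilon> i) * (x i - y i))"

definition adv_val :: "nat \<Rightarrow> nat \<Rightarrow> (nat \<Rightarrow> real) \<Rightarrow> (nat \<Rightarrow> real) \<Rightarrow> (nat \<Rightarrow> real)
    \<Rightarrow> (nat \<Rightarrow> real) \<Rightarrow> (nat \<Rightarrow> real) \<Rightarrow> real" where
  "adv_val n \<Gamma>' chat d x \<delta> y = Min ((\<lambda>\<epsilon>. adv_obj n chat d x \<delta> y \<epsilon>) ` Delta n \<Gamma>')"

end

theory Submission
  imports Defs
begin

text \<open>The feasible pairs \<open>(\<delta>, y)\<close> form a finite set, so an optimal pair exists.
Where \<open>y\<^sub>i = 1\<close> we have \<open>x\<^sub>i - y\<^sub>i \<le> 0\<close>, so the term \<open>d\<^sub>i \<delta>\<^sub>i (x\<^sub>i - y\<^sub>i)\<close> can only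
lower the objective: setting \<open>\<delta>\<^sub>i = 0\<close> on the support of \<open>y\<close> keeps \<open>\<delta>\<close> in
\<open>\<Delta>(\<Gamma>)\<close> and does not decrease the objective for any \<open>\<epsilon>\<close>, hence not the inner
minimum either. The modified pair is therefore still optimal, and it satisfies
\<open>y\<^sub>i + \<delta>\<^sub>i \<le> 1\<close>.\<close>

lemma binvecs_finite: "finite (binvecs n)"
proof -
  have "binvecs n \<subseteq> (\<lambda>S i. if i \<in> S then (1::real) else 0) ` Pow {1..n}"
  proof
    fix v assume v: "v \<in> binvecs n"
    have "v = (\<lambda>i. if i \<in> {i\<in>{1..n}. v i = 1} then 1 else 0)"
      using v unfolding binvecs_def by (force intro!: ext)
    then show "v \<in> (\<lambda>S i. if i \<in> S then (1::real) else 0) ` Pow {1..n}" by blast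
  qed
  then show ?thesis by (rule finite_subset) simp
qed

lemma binvecs_cases:
  assumes "v \<in> binvecs n"
  shows "v i = 0 \<or> v i = 1"
  using assms unfolding binvecs_def by (cases "i \<in> {1..n}") auto

lemma Delta_finite: "finite (Delta n k)"
  unfolding Delta_def using binvecs_finite by simp

lemma zero_in_Delta: "(\<lambda>_. 0) \<in> Delta n k"
  unfolding Delta_def binvecs_def by simp

lemma ex_maximizer_on_product:
  fixes f :: "'a \<Rightarrow> 'b \<Rightarrow> 'c::linorder"
  assumes "finite A" "finite B" "A \<noteq> {}" "B \<noteq> {}"
  shows "\<exists>a\<in>A. \<exists>b\<in>B. \<forall>a'\<in>A. \<forall>b'\<in>B. f a' b' \<le> f a b"
proof -
  have fin: "finite (A \<times> B)" and nonempty: "A \<times> B \<noteq> {}" using assms by auto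
  obtain p where p: "p \<in> A \<times> B" and max: "Max (case_prod f ` (A \<times> B)) = case_prod f p"
    using obtains_MAX[OF fin nonempty] .
  have "f a' b' \<le> case_prod f p" if "a' \<in> A" "b' \<in> B" for a' b'
    using Max_ge[OF finite_imageI[OF fin], of "f a' b'"] that max by force
  then show ?thesis using p by auto
qed

lemma Min_image_mono:
  fixes f g :: "'a \<Rightarrow> 'b::linorder"
  assumes "finite A" "A \<noteq> {}" "\<And>a. a \<in> A \<Longrightarrow> f a \<le> g a"
  shows "Min (f ` A) \<le> Min (g ` A)"
  using assms by (auto intro: order_trans[OF Min_le])

definition clear_on_support :: "(nat \<Rightarrow> real) \<Rightarrow> (nat \<Rightarrow> real) \<Rightarrow> nat \<Rightarrow> real" where
  "clear_on_support y \<delta> = (\<lambda>i. if y i = 1 then 0 else \<delta> i)"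

lemma clear_on_support_le:
  assumes "\<delta> \<in> binvecs n"
  shows "clear_on_support y \<delta> i \<le> \<delta> i"
  using binvecs_cases[OF assms, of i] by (auto simp: clear_on_support_def)

lemma clear_on_support_in_Delta:
  assumes "\<delta> \<in> Delta n k"
  shows "clear_on_support y \<delta> \<in> Delta n k"
proof -
  have \<delta>: "\<delta> \<in> binvecs n" using assms by (simp add: Delta_def)
  then have "clear_on_support y \<delta> \<in> binvecs n"
    unfolding binvecs_def clear_on_support_def by auto
  moreover have "(\<Sum>i\<in>{1..n}. clear_on_support y \<delta> i) \<le> (\<Sum>i\<in>{1..n}. \<delta> i)"
    using clear_on_support_le[OF \<delta>] by (rule sum_mono)
  ultimately show ?thesis using assms by (simp add: Delta_def)
qed

lemma add_clear_on_support_le_1: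
  assumes "y \<in> binvecs n" "\<delta> \<in> binvecs n"
  shows "y i + clear_on_support y \<delta> i \<le> 1"
  using binvecs_cases[OF assms(1), of i] binvecs_cases[OF assms(2), of i]
  by (auto simp: clear_on_support_def)

lemma adv_obj_clear_on_support_ge:
  assumes "x \<in> binvecs n" "y \<in> binvecs n" "\<delta> \<in> binvecs n" "\<forall>i\<in>{1..n}. d i \<ge> 0"
  shows "adv_obj n chat d x \<delta> y \<epsilon> \<le> adv_obj n chat d x (clear_on_support y \<delta>) y \<epsilon>"
  unfolding adv_obj_def
proof (rule sum_mono)
  fix i assume i: "i \<in> {1..n}"
  show "(chat i + d i * \<delta> i + d i * \<epsilon> i) * (x i - y i)
      \<le> (chat i + d i * clear_on_support y \<delta> i + d i * \<epsilon> i) * (x i - y i)"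
  proof (cases "y i = 1")
    case True
    have "x i - y i \<le> 0" using binvecs_cases[OF assms(1), of i] True by auto
    moreover have "d i * clear_on_support y \<delta> i \<le> d i * \<delta> i"
      using clear_on_support_le[OF assms(3)] assms(4) i by (simp add: mult_left_mono)
    ultimately show ?thesis by (simp add: mult_right_mono_neg)
  qed (simp add: clear_on_support_def)
qed

lemma adv_val_clear_on_support_ge:
  assumes "x \<in> binvecs n" "y \<in> binvecs n" "\<delta> \<in> binvecs n" "\<forall>i\<in>{1..n}. d i \<ge> 0"
  shows "adv_val n \<Gamma>' chat d x \<delta> y \<le> adv_val n \<Gamma>' chat d x (clear_on_support y \<delta>) y"
  unfolding adv_val_def
  using Delta_finite zero_in_Delta[of n \<Gamma>'] adv_obj_clear_on_support_ge[OF assms]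
  by (intro Min_image_mono) blast+

theorem lemma2:
  fixes n \<Gamma> \<Gamma>' :: nat and X :: "(nat \<Rightarrow> real) set"
    and x chat d :: "nat \<Rightarrow> real"
  assumes "X \<subseteq> binvecs n" and "x \<in> X"
    and "\<forall>i\<in>{1..n}. chat i \<ge> 0" and "\<forall>i\<in>{1..n}. d i \<ge> 0"
  shows "\<exists>\<delta>\<in>Delta n \<Gamma>. \<exists>y\<in>X.
           (\<forall>\<delta>'\<in>Delta n \<Gamma>. \<forall>y'\<in>X.
              adv_val n \<Gamma>' chat d x \<delta>' y' \<le> adv_val n \<Gamma>' chat d x \<delta> y)
         \<and> (\<forall>i\<in>{1..n}. y i + \<delta> i \<le> 1)"
proof -
  have "finite X" using assms(1) binvecs_finite by (rule finite_subset)
  then obtain \<delta> y where \<delta>: "\<delta> \<in> Delta n \<Gamma>" and y: "y \<in> X"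
    and opt: "\<forall>\<delta>'\<in>Delta n \<Gamma>. \<forall>y'\<in>X. adv_val n \<Gamma>' chat d x \<delta>' y' \<le> adv_val n \<Gamma>' chat d x \<delta> y"
    using ex_maximizer_on_product[of "Delta n \<Gamma>" X "adv_val n \<Gamma>' chat d x"]
      Delta_finite zero_in_Delta assms(2) by blast
  have x_bin: "x \<in> binvecs n" and y_bin: "y \<in> binvecs n" using assms(1,2) y by auto
  have \<delta>_bin: "\<delta> \<in> binvecs n" using \<delta> by (simp add: Delta_def)
  have "adv_val n \<Gamma>' chat d x \<delta> y \<le> adv_val n \<Gamma>' chat d x (clear_on_support y \<delta>) y"
    using x_bin y_bin \<delta>_bin assms(4) by (rule adv_val_clear_on_support_ge)
  then show ?thesis
    using opt y clear_on_support_in_Delta[OF \<delta>] add_clear_on_support_le_1[OF y_bin \<delta>_bin]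
    by (meson order_trans)
qed

end
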